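(* Let $C(\cdot,t)$, $t\in(-\infty,+\infty)$, be a solution by closed curves of the flow $$\frac{\partial C(p,t)}{\partial t}=\Big(\lambda+\int_0^{\xi(p)}\varphi\,d\xi\Big)C+\frac{\varphi}{2}C_\xi$$ ($\lambda$ a real constant) whose centro-affine curvature $\varphi$ is uniformly bounded on $S^1\times(-\infty,+\infty)$. Then for every integer $n\ge0$ there exists a constant $C_n$ such that $|\varphi_{\xi^n}(\xi,t)|\le C_n$ on $S^1\times(-\infty,+\infty)$.
   Context: For $u,v\in\mathbb{R}^2$, $[u,v]$ denotes the determinant of the matrix with columns $u,v$. Each curve $C(\cdot,t):S^1\to\mathbb{R}^2$ is smooth, closed, with $[C,C_p]\neq0$, $[C_p,C_{pp}]\neq0$ (then $[C_p,C_{pp}]/[C,C_p]>0$). The centro-affine metric is $g=\sqrt{[C_p,C_{pp}]/[C,C_p]}$, centro-affine arc-length $\xi(p)=\int_{p_0}^p g\,dp$ (so $\partial_\xi=g^{-1}\partial_p$), centro-affine curvature $\varphi=[C_{\xi\xi},C]/[C_\xi,C]$, and $\varphi_{\xi^n}=\partial^n\varphi/\partial\xi^n$. *)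

theory Defs
  imports "HOL-Analysis.Analysis"
begin

definition det2 :: "real \<times> real \<Rightarrow> real \<times> real \<Rightarrow> real" where
  "det2 u v = fst u * snd v - snd u * fst v"

definition dP :: "(real \<Rightarrow> real \<Rightarrow> 'a::real_normed_vector) \<Rightarrow> real \<Rightarrow> real \<Rightarrow> 'a" where
  "dP F p t = vector_derivative (\<lambda>q. F q t) (at p)"

definition dT :: "(real \<Rightarrow> real \<Rightarrow> 'a::real_normed_vector) \<Rightarrow> real \<Rightarrow> real \<Rightarrow> 'a" where
  "dT F p t = vector_derivative (\<lambda>s. F p s) (at t)"

text \<open>C-infinity in (p,t) jointly: all iterated partial derivatives exist and are
  (jointly) continuous.\<close>
coinductive smooth2 :: "(real \<Rightarrow> real \<Rightarrow> real) \<Rightarrow> bool" where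
  "\<lbrakk> continuous_on UNIV (\<lambda>z. F (fst z) (snd z));
     \<forall>p t. (\<lambda>q. F q t) differentiable (at p);
     \<forall>p t. (\<lambda>s. F p s) differentiable (at t);
     smooth2 (dP F); smooth2 (dT F) \<rbrakk> \<Longrightarrow> smooth2 F"

definition smooth_curve_family :: "(real \<Rightarrow> real \<Rightarrow> real \<times> real) \<Rightarrow> bool" where
  "smooth_curve_family C \<longleftrightarrow> smooth2 (\<lambda>p t. fst (C p t)) \<and> smooth2 (\<lambda>p t. snd (C p t))"

definition ca_metric :: "(real \<Rightarrow> real \<Rightarrow> real \<times> real) \<Rightarrow> real \<Rightarrow> real \<Rightarrow> real" where
  "ca_metric C p t = sqrt (det2 (dP C p t) (dP (dP C) p t) / det2 (C p t) (dP C p t))"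

definition dXi :: "(real \<Rightarrow> real \<Rightarrow> real \<times> real) \<Rightarrow> (real \<Rightarrow> real \<Rightarrow> 'a::real_normed_vector)
                   \<Rightarrow> real \<Rightarrow> real \<Rightarrow> 'a" where
  "dXi C F p t = inverse (ca_metric C p t) *\<^sub>R dP F p t"

definition ca_curv :: "(real \<Rightarrow> real \<Rightarrow> real \<times> real) \<Rightarrow> real \<Rightarrow> real \<Rightarrow> real" where
  "ca_curv C p t = det2 (dXi C (dXi C C) p t) (C p t) / det2 (dXi C C p t) (C p t)"

definition ca_curv_deriv :: "(real \<Rightarrow> real \<Rightarrow> real \<times> real) \<Rightarrow> nat \<Rightarrow> real \<Rightarrow> real \<Rightarrow> real" where
  "ca_curv_deriv C n = (dXi C ^^ n) (ca_curv C)"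

definition sint :: "real \<Rightarrow> real \<Rightarrow> (real \<Rightarrow> real) \<Rightarrow> real" where
  "sint a b f = (if a \<le> b then integral {a..b} f else - integral {b..a} f)"

text \<open>Nonlocal term: integral of phi d xi from the base point to xi(p),
  i.e. the integral of phi * g dp from p0 to p.\<close>
definition ca_nonlocal :: "(real \<Rightarrow> real \<Rightarrow> real \<times> real) \<Rightarrow> real \<Rightarrow> real \<Rightarrow> real \<Rightarrow> real" where
  "ca_nonlocal C p0 p t = sint p0 p (\<lambda>q. ca_curv C q t * ca_metric C q t)"

end

theory Submission
  imports Defs
begin

text \<open>In centro-affine arc-length the curve satisfies \<open>C\<^sub>\<xi>\<^sub>\<xi> = -C + \<phi> C\<^sub>\<xi>\<close>, and \<open>\<partial>\<^sub>t\<close> commutes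
  with \<open>\<partial>\<^sub>\<xi>\<close> up to \<open>(g\<^sub>t/g) \<partial>\<^sub>\<xi>\<close>. Computing \<open>\<partial>\<^sub>t C\<^sub>\<xi>\<^sub>\<xi>\<close> in two ways in the frame \<open>(C, C\<^sub>\<xi>)\<close>
  gives \<open>g\<^sub>t/g = \<phi>\<^sup>2/2\<close> and \<open>\<phi>\<^sub>t = \<phi>\<^sub>\<xi>\<^sub>\<xi>/2 + 2\<phi> - \<phi>\<^sup>3/2\<close>. Hence \<open>u = \<phi>\<^sub>\<xi>\<^sup>n\<close> satisfies
  \<open>u\<^sub>t = u\<^sub>\<xi>\<^sub>\<xi>/2 + q\<close>, where for \<open>n \<ge> 1\<close> the term \<open>q\<close> is linear in \<open>u\<close> with coefficients
  polynomial in \<open>\<phi>, \<dots>, \<phi>\<^sub>\<xi>\<^sup>n\<^sup>-\<^sup>1\<close>. The bounds follow by induction on \<open>n\<close> from a Bernstein-type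
  maximum principle: on every slab \<open>S\<^sup>1 \<times> [t\<^sub>0 - 1, t\<^sub>0]\<close> the function
  \<open>(t - t\<^sub>0 + 1) u\<^sup>2 + K (\<phi>\<^sub>\<xi>\<^sup>n\<^sup>-\<^sup>1)\<^sup>2\<close> attains its maximum, where the equation bounds \<open>u\<^sup>2\<close> by the
  bounds on lower derivatives. The weight vanishes at \<open>t\<^sub>0 - 1\<close>, so no initial data enter and the
  bound is uniform on the whole time axis.\<close>

section \<open>Smooth functions of two variables\<close>

lemma dP_eqI: "((\<lambda>q. F q t) has_real_derivative D) (at p) \<Longrightarrow> dP F p t = (D::real)"
  unfolding dP_def by (simp add: has_real_derivative_iff_has_vector_derivative vector_derivative_at)

lemma dT_eqI: "((\<lambda>s. F p s) has_real_derivative D) (at t) \<Longrightarrow> dT F p t = (D::real)"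
  unfolding dT_def by (simp add: has_real_derivative_iff_has_vector_derivative vector_derivative_at)

lemma dP_eqI_vector: "((\<lambda>q. F q t) has_vector_derivative D) (at p) \<Longrightarrow> dP F p t = D"
  unfolding dP_def by (simp add: vector_derivative_at)

lemma dT_eqI_vector: "((\<lambda>s. F p s) has_vector_derivative D) (at t) \<Longrightarrow> dT F p t = D"
  unfolding dT_def by (simp add: vector_derivative_at)

lemma has_dP_iff_differentiable:
  "((\<lambda>q. F q t) has_real_derivative dP F p t) (at p) \<longleftrightarrow> (\<lambda>q. F q t) differentiable (at p)"
  unfolding dP_def has_real_derivative_iff_has_vector_derivative
  using vector_derivative_works by blast

lemma has_dT_iff_differentiable:
  "((\<lambda>s. F p s) has_real_derivative dT F p t) (at t) \<longleftrightarrow> (\<lambda>s. F p s) differentiable (at t)"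
  unfolding dT_def has_real_derivative_iff_has_vector_derivative
  using vector_derivative_works by blast

definition smooth2_step :: "((real \<Rightarrow> real \<Rightarrow> real) \<Rightarrow> bool) \<Rightarrow> (real \<Rightarrow> real \<Rightarrow> real) \<Rightarrow> bool" where
  "smooth2_step S F \<longleftrightarrow> continuous_on UNIV (\<lambda>z. F (fst z) (snd z)) \<and>
     (\<forall>p t. ((\<lambda>q. F q t) has_real_derivative dP F p t) (at p)) \<and>
     (\<forall>p t. ((\<lambda>s. F p s) has_real_derivative dT F p t) (at t)) \<and> S (dP F) \<and> S (dT F)"

lemma smooth2_iff_step: "smooth2 F \<longleftrightarrow> smooth2_step smooth2 F"
  unfolding smooth2_step_def has_dP_iff_differentiable has_dT_iff_differentiable
  by (subst smooth2.simps) blast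

lemma smooth2_continuous: "smooth2 F \<Longrightarrow> continuous_on UNIV (\<lambda>z. F (fst z) (snd z))"
  and smooth2_has_dP: "smooth2 F \<Longrightarrow> ((\<lambda>q. F q t) has_real_derivative dP F p t) (at p)"
  and smooth2_has_dT: "smooth2 F \<Longrightarrow> ((\<lambda>s. F p s) has_real_derivative dT F p t) (at t)"
  and smooth2_dP: "smooth2 F \<Longrightarrow> smooth2 (dP F)"
  and smooth2_dT: "smooth2 F \<Longrightarrow> smooth2 (dT F)"
  using smooth2_iff_step[of F] unfolding smooth2_step_def by blast+

lemma smooth2_stepD:
  assumes "smooth2_step S F"
  shows "continuous_on UNIV (\<lambda>z. F (fst z) (snd z))"
    and "((\<lambda>q. F q t) has_real_derivative dP F p t) (at p)"
    and "((\<lambda>s. F p s) has_real_derivative dT F p t) (at t)"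
    and "S (dP F)" "S (dT F)"
  using assms by (simp_all add: smooth2_step_def)

lemma smooth2_stepI:
  assumes "continuous_on UNIV (\<lambda>z. F (fst z) (snd z))"
    and dp: "\<And>p t. ((\<lambda>q. F q t) has_real_derivative Fp p t) (at p)"
    and dt: "\<And>p t. ((\<lambda>s. F p s) has_real_derivative Ft p t) (at t)"
    and "S Fp" "S Ft"
  shows "smooth2_step S F"
proof -
  have "dP F = Fp" "dT F = Ft" by (intro ext dP_eqI dT_eqI dp dt)+
  then show ?thesis using assms by (simp add: smooth2_step_def)
qed

text \<open>Closure of \<^const>\<open>smooth2\<close> under algebraic operations is proved by coinduction up to
  the algebra generated by smooth functions: the partial derivatives of a product, quotient or
  square root are again in that algebra, though not of the same shape.\<close>

inductive smooth2_alg :: "(real \<Rightarrow> real \<Rightarrow> real) \<Rightarrow> bool" where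
  smooth: "smooth2 F \<Longrightarrow> smooth2_alg F"
| const: "smooth2_alg (\<lambda>p t. c)"
| add: "smooth2_alg F \<Longrightarrow> smooth2_alg G \<Longrightarrow> smooth2_alg (\<lambda>p t. F p t + G p t)"
| mult: "smooth2_alg F \<Longrightarrow> smooth2_alg G \<Longrightarrow> smooth2_alg (\<lambda>p t. F p t * G p t)"
| inverse: "smooth2_alg F \<Longrightarrow> \<forall>p t. F p t \<noteq> 0 \<Longrightarrow> smooth2_alg (\<lambda>p t. inverse (F p t))"
| sqrt: "smooth2_alg F \<Longrightarrow> \<forall>p t. F p t > 0 \<Longrightarrow> smooth2_alg (\<lambda>p t. sqrt (F p t))"

lemma smooth2_alg_minus: "smooth2_alg F \<Longrightarrow> smooth2_alg (\<lambda>p t. - F p t)"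
  using smooth2_alg.mult[OF smooth2_alg.const[of "-1"]] by simp

lemma smooth2_step_inverse:
  assumes F: "smooth2_alg F" "\<forall>p t. F p t \<noteq> 0" and step: "smooth2_step smooth2_alg F"
  shows "smooth2_step smooth2_alg (\<lambda>p t. inverse (F p t))"
proof (rule smooth2_stepI)
  note F' = smooth2_stepD[OF step]
  have nz: "F p t \<noteq> 0" for p t
    using F(2) by blast
  have inv: "smooth2_alg (\<lambda>p t. inverse (F p t))"
    using F by (rule smooth2_alg.inverse)
  show "continuous_on UNIV (\<lambda>z. inverse (F (fst z) (snd z)))"
    using F'(1) nz by (intro continuous_on_inverse) auto
  show "((\<lambda>q. inverse (F q t)) has_real_derivative - (dP F p t * inverse (F p t) * inverse (F p t))) (at p)"
    "((\<lambda>s. inverse (F p s)) has_real_derivative - (dT F p t * inverse (F p t) * inverse (F p t))) (at t)"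
    for p t
    using DERIV_inverse_fun[OF F'(2) nz] DERIV_inverse_fun[OF F'(3) nz]
    by (simp_all add: power2_eq_square mult.assoc)
  show "smooth2_alg (\<lambda>p t. - (dP F p t * inverse (F p t) * inverse (F p t)))"
    "smooth2_alg (\<lambda>p t. - (dT F p t * inverse (F p t) * inverse (F p t)))"
    by (intro smooth2_alg_minus smooth2_alg.mult F' inv)+
qed

lemma smooth2_step_sqrt:
  assumes F: "smooth2_alg F" "\<forall>p t. F p t > 0" and step: "smooth2_step smooth2_alg F"
  shows "smooth2_step smooth2_alg (\<lambda>p t. sqrt (F p t))"
proof (rule smooth2_stepI)
  note F' = smooth2_stepD[OF step]
  have pos: "F p t > 0" for p t
    using F(2) by blast
  then have "F p t \<noteq> 0" for p t
    by (metis less_irrefl)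
  then have inv: "smooth2_alg (\<lambda>p t. inverse (sqrt (F p t)))"
    using F by (intro smooth2_alg.inverse smooth2_alg.sqrt) auto
  show "continuous_on UNIV (\<lambda>z. sqrt (F (fst z) (snd z)))"
    using F'(1) by (rule continuous_on_real_sqrt)
  show "((\<lambda>q. sqrt (F q t)) has_real_derivative dP F p t / 2 * inverse (sqrt (F p t))) (at p)"
    "((\<lambda>s. sqrt (F p s)) has_real_derivative dT F p t / 2 * inverse (sqrt (F p t))) (at t)"
    for p t
    using DERIV_chain2[OF DERIV_real_sqrt[OF pos] F'(2)] DERIV_chain2[OF DERIV_real_sqrt[OF pos] F'(3)]
    by (simp_all add: field_simps)
  show "smooth2_alg (\<lambda>p t. dP F p t / 2 * inverse (sqrt (F p t)))"
    "smooth2_alg (\<lambda>p t. dT F p t / 2 * inverse (sqrt (F p t)))"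
    using smooth2_alg.mult[OF smooth2_alg.mult[OF _ smooth2_alg.const[of "1/2"]] inv] F'(4,5)
    by simp_all
qed

lemma smooth2_alg_step: "smooth2_alg F \<Longrightarrow> smooth2_step smooth2_alg F"
proof (induction rule: smooth2_alg.induct)
  case (smooth F)
  then show ?case
    using smooth2_iff_step[of F] unfolding smooth2_step_def by (blast intro: smooth2_alg.smooth)
next
  case (const c)
  show ?case by (rule smooth2_stepI[where Fp = "\<lambda>p t. 0" and Ft = "\<lambda>p t. 0"])
    (auto intro: smooth2_alg.const)
next
  case (add F G)
  note F = smooth2_stepD[OF add.IH(1)] and G = smooth2_stepD[OF add.IH(2)]
  show ?case
    by (rule smooth2_stepI[where Fp = "\<lambda>p t. dP F p t + dP G p t"
          and Ft = "\<lambda>p t. dT F p t + dT G p t"];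
        intro continuous_on_add DERIV_add smooth2_alg.add F G)
next
  case (mult F G)
  note F = smooth2_stepD[OF mult.IH(1)] and G = smooth2_stepD[OF mult.IH(2)]
  show ?case
    by (rule smooth2_stepI[where Fp = "\<lambda>p t. F p t * dP G p t + dP F p t * G p t"
          and Ft = "\<lambda>p t. F p t * dT G p t + dT F p t * G p t"];
        intro continuous_on_mult DERIV_mult' smooth2_alg.add smooth2_alg.mult F G mult.hyps)
next
  case (inverse F)
  then show ?case
    by (rule smooth2_step_inverse)
next
  case (sqrt F)
  then show ?case
    by (rule smooth2_step_sqrt)
qed

lemma smooth2_alg_smooth2: "smooth2_alg F \<Longrightarrow> smooth2 F"
proof (coinduction arbitrary: F rule: smooth2.coinduct)
  case (smooth2 F)
  note S = smooth2_stepD[OF smooth2_alg_step[OF smooth2]]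
  show ?case
    using S(1,4,5) S(2)[unfolded has_dP_iff_differentiable] S(3)[unfolded has_dT_iff_differentiable]
    by blast
qed

lemma smooth2_const: "smooth2 (\<lambda>p t. c)"
  by (rule smooth2_alg_smooth2 smooth2_alg.const)+

lemma smooth2_add: "smooth2 F \<Longrightarrow> smooth2 G \<Longrightarrow> smooth2 (\<lambda>p t. F p t + G p t)"
  by (rule smooth2_alg_smooth2) (intro smooth2_alg.add smooth2_alg.smooth)

lemma smooth2_mult: "smooth2 F \<Longrightarrow> smooth2 G \<Longrightarrow> smooth2 (\<lambda>p t. F p t * G p t)"
  by (rule smooth2_alg_smooth2) (intro smooth2_alg.mult smooth2_alg.smooth)

lemma smooth2_inverse: "smooth2 F \<Longrightarrow> \<forall>p t. F p t \<noteq> 0 \<Longrightarrow> smooth2 (\<lambda>p t. inverse (F p t))"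
  by (rule smooth2_alg_smooth2) (intro smooth2_alg.inverse smooth2_alg.smooth)

lemma smooth2_sqrt: "smooth2 F \<Longrightarrow> \<forall>p t. F p t > 0 \<Longrightarrow> smooth2 (\<lambda>p t. sqrt (F p t))"
  by (rule smooth2_alg_smooth2) (intro smooth2_alg.sqrt smooth2_alg.smooth)

lemma smooth2_minus: "smooth2 F \<Longrightarrow> smooth2 (\<lambda>p t. - F p t)"
  using smooth2_mult[OF smooth2_const[of "-1"]] by simp

lemma smooth2_diff: "smooth2 F \<Longrightarrow> smooth2 G \<Longrightarrow> smooth2 (\<lambda>p t. F p t - G p t)"
  using smooth2_add[OF _ smooth2_minus] by simp

lemma smooth2_divide: "smooth2 F \<Longrightarrow> smooth2 G \<Longrightarrow> \<forall>p t. G p t \<noteq> 0 \<Longrightarrow> smooth2 (\<lambda>p t. F p t / G p t)"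
  using smooth2_mult[OF _ smooth2_inverse] by (simp add: divide_inverse)

lemma smooth2_divide_const: "smooth2 F \<Longrightarrow> smooth2 (\<lambda>p t. F p t / c)"
  using smooth2_mult[OF _ smooth2_const[of "inverse c"]] by (simp add: divide_inverse)

lemma smooth2_continuous_on_slice: "smooth2 F \<Longrightarrow> continuous_on UNIV (\<lambda>q. F q t)"
proof -
  assume "smooth2 F"
  then have "continuous_on UNIV ((\<lambda>z. F (fst z) (snd z)) \<circ> (\<lambda>q. (q, t)))"
    by (intro continuous_on_compose continuous_intros continuous_on_subset[OF smooth2_continuous]) auto
  then show ?thesis
    by (simp add: o_def)
qed

lemma dT_add: "smooth2 F \<Longrightarrow> smooth2 G \<Longrightarrow> dT (\<lambda>p t. F p t + G p t) p t = dT F p t + dT G p t"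
  by (intro dT_eqI DERIV_add smooth2_has_dT)

lemma dT_minus: "smooth2 F \<Longrightarrow> dT (\<lambda>p t. - F p t) p t = - dT F p t"
  by (intro dT_eqI DERIV_minus smooth2_has_dT)

lemma dT_mult:
  "smooth2 F \<Longrightarrow> smooth2 G \<Longrightarrow> dT (\<lambda>p t. F p t * G p t) p t = F p t * dT G p t + dT F p t * G p t"
  by (intro dT_eqI DERIV_mult' smooth2_has_dT)

lemma continuous2_box_near:
  fixes G :: "real \<Rightarrow> real \<Rightarrow> real"
  assumes "continuous_on UNIV (\<lambda>z. G (fst z) (snd z))" "e > 0"
  obtains d where "d > 0" "\<And>x s. \<bar>x - p\<bar> < d \<Longrightarrow> \<bar>s - t\<bar> < d \<Longrightarrow> \<bar>G x s - G p t\<bar> < e"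
proof -
  obtain d where d: "d > 0" "\<And>z. dist z (p, t) < d \<Longrightarrow> dist (G (fst z) (snd z)) (G p t) < e"
    using assms unfolding continuous_on_iff by fastforce
  have "\<bar>G x s - G p t\<bar> < e" if "\<bar>x - p\<bar> < d / 2" "\<bar>s - t\<bar> < d / 2" for x s
  proof -
    have "dist (x, s) (p, t) \<le> \<bar>x - p\<bar> + \<bar>s - t\<bar>"
      using sqrt_sum_squares_le_sum_abs[of "x - p" "s - t"] by (simp add: dist_Pair_Pair dist_real_def)
    then show ?thesis
      using d(2)[of "(x, s)"] that by (simp add: dist_real_def)
  qed
  then show ?thesis
    using d(1) by (intro that[of "d / 2"]) auto
qed

lemma second_difference_eq_dT_dP:
  assumes F: "smooth2 F" and h: "h > 0"
  obtains x s where "p < x" "x < p + h" "t < s" "s < t + h"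
    "F (p + h) (t + h) - F (p + h) t - F p (t + h) + F p t = h * h * dT (dP F) x s"
proof -
  have "((\<lambda>x. F x (t + h) - F x t) has_real_derivative dP F x (t + h) - dP F x t) (at x)" for x
    by (intro DERIV_diff smooth2_has_dP[OF F])
  then obtain x where x: "p < x" "x < p + h"
    "F (p + h) (t + h) - F (p + h) t - (F p (t + h) - F p t) = h * (dP F x (t + h) - dP F x t)"
    using MVT2[of p "p + h" "\<lambda>x. F x (t + h) - F x t" "\<lambda>x. dP F x (t + h) - dP F x t"] h by auto
  obtain s where "t < s" "s < t + h" "dP F x (t + h) - dP F x t = h * dT (dP F) x s"
    using MVT2[of t "t + h" "\<lambda>s. dP F x s" "\<lambda>s. dT (dP F) x s"] h smooth2_has_dT[OF smooth2_dP[OF F]]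
    by auto
  with x show ?thesis
    by (intro that) (simp_all add: algebra_simps)
qed

lemma second_difference_eq_dP_dT:
  assumes F: "smooth2 F" and h: "h > 0"
  obtains x s where "p < x" "x < p + h" "t < s" "s < t + h"
    "F (p + h) (t + h) - F (p + h) t - F p (t + h) + F p t = h * h * dP (dT F) x s"
proof -
  have "((\<lambda>s. F (p + h) s - F p s) has_real_derivative dT F (p + h) s - dT F p s) (at s)" for s
    by (intro DERIV_diff smooth2_has_dT[OF F])
  then obtain s where s: "t < s" "s < t + h"
    "F (p + h) (t + h) - F p (t + h) - (F (p + h) t - F p t) = h * (dT F (p + h) s - dT F p s)"
    using MVT2[of t "t + h" "\<lambda>s. F (p + h) s - F p s" "\<lambda>s. dT F (p + h) s - dT F p s"] h by auto
  obtain x where "p < x" "x < p + h" "dT F (p + h) s - dT F p s = h * dP (dT F) x s"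
    using MVT2[of p "p + h" "\<lambda>x. dT F x s" "\<lambda>x. dP (dT F) x s"] h smooth2_has_dP[OF smooth2_dT[OF F]]
    by auto
  with s show ?thesis
    by (intro that) (simp_all add: algebra_simps)
qed

lemma smooth2_dP_dT_commute:
  assumes F: "smooth2 F"
  shows "dP (dT F) p t = dT (dP F) p t"
proof (rule ccontr)
  define a where "a = dT (dP F) p t"
  define b where "b = dP (dT F) p t"
  assume "dP (dT F) p t \<noteq> dT (dP F) p t"
  then have e: "\<bar>a - b\<bar> / 2 > 0"
    by (simp add: a_def b_def)
  obtain d1 where d1: "d1 > 0" "\<And>x s. \<bar>x - p\<bar> < d1 \<Longrightarrow> \<bar>s - t\<bar> < d1 \<Longrightarrow> \<bar>dT (dP F) x s - a\<bar> < \<bar>a - b\<bar> / 2"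
    using continuous2_box_near[OF smooth2_continuous[OF smooth2_dT[OF smooth2_dP[OF F]]] e]
    unfolding a_def by blast
  obtain d2 where d2: "d2 > 0" "\<And>x s. \<bar>x - p\<bar> < d2 \<Longrightarrow> \<bar>s - t\<bar> < d2 \<Longrightarrow> \<bar>dP (dT F) x s - b\<bar> < \<bar>a - b\<bar> / 2"
    using continuous2_box_near[OF smooth2_continuous[OF smooth2_dP[OF smooth2_dT[OF F]]] e]
    unfolding b_def by blast
  define h where "h = min d1 d2 / 2"
  have h: "h > 0" "h < d1" "h < d2"
    using d1 d2 by (auto simp: h_def)
  obtain x1 s1 where 1: "p < x1" "x1 < p + h" "t < s1" "s1 < t + h"
    "F (p + h) (t + h) - F (p + h) t - F p (t + h) + F p t = h * h * dT (dP F) x1 s1"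
    using second_difference_eq_dT_dP[OF F h(1)] by blast
  obtain x2 s2 where 2: "p < x2" "x2 < p + h" "t < s2" "s2 < t + h"
    "F (p + h) (t + h) - F (p + h) t - F p (t + h) + F p t = h * h * dP (dT F) x2 s2"
    using second_difference_eq_dP_dT[OF F h(1)] by blast
  have "dT (dP F) x1 s1 = dP (dT F) x2 s2"
    using 1(5) 2(5) h(1) by simp
  moreover have "\<bar>dT (dP F) x1 s1 - a\<bar> < \<bar>a - b\<bar> / 2"
    using d1(2)[of x1 s1] 1 h by simp
  moreover have "\<bar>dP (dT F) x2 s2 - b\<bar> < \<bar>a - b\<bar> / 2"
    using d2(2)[of x2 s2] 2 h by simp
  ultimately show False
    by (simp add: abs_if split: if_splits)
qed

definition p_differentiable :: "(real \<Rightarrow> real \<Rightarrow> real) \<Rightarrow> bool" where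
  "p_differentiable F \<longleftrightarrow> (\<forall>p t. ((\<lambda>q. F q t) has_real_derivative dP F p t) (at p))"

lemma p_differentiableD: "p_differentiable F \<Longrightarrow> ((\<lambda>q. F q t) has_real_derivative dP F p t) (at p)"
  by (simp add: p_differentiable_def)

lemma smooth2_p_differentiable: "smooth2 F \<Longrightarrow> p_differentiable F"
  by (simp add: p_differentiable_def smooth2_has_dP)

lemma dP_eq_funI: "(\<And>p t. ((\<lambda>q. F q t) has_real_derivative Fp p t) (at p)) \<Longrightarrow> dP F = Fp"
  by (intro ext dP_eqI)

lemma dP_add:
  "p_differentiable F \<Longrightarrow> p_differentiable G \<Longrightarrow> dP (\<lambda>p t. F p t + G p t) = (\<lambda>p t. dP F p t + dP G p t)"
  by (intro dP_eq_funI DERIV_add p_differentiableD)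

lemma dP_diff:
  "p_differentiable F \<Longrightarrow> p_differentiable G \<Longrightarrow> dP (\<lambda>p t. F p t - G p t) = (\<lambda>p t. dP F p t - dP G p t)"
  by (intro dP_eq_funI DERIV_diff p_differentiableD)

lemma dP_mult: "p_differentiable F \<Longrightarrow> p_differentiable G \<Longrightarrow>
    dP (\<lambda>p t. F p t * G p t) = (\<lambda>p t. F p t * dP G p t + dP F p t * G p t)"
  by (intro dP_eq_funI DERIV_mult' p_differentiableD)

lemma dP_divide_const: "p_differentiable F \<Longrightarrow> dP (\<lambda>p t. F p t / c) = (\<lambda>p t. dP F p t / c)"
  by (intro dP_eq_funI DERIV_cdivide p_differentiableD)

lemma dP_const: "dP (\<lambda>p t. c) = (\<lambda>p t. 0 :: real)"
  by (intro dP_eq_funI DERIV_const)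

lemma
  assumes "p_differentiable F" "p_differentiable G"
  shows p_differentiable_add: "p_differentiable (\<lambda>p t. F p t + G p t)"
    and p_differentiable_diff: "p_differentiable (\<lambda>p t. F p t - G p t)"
    and p_differentiable_mult: "p_differentiable (\<lambda>p t. F p t * G p t)"
  unfolding p_differentiable_def dP_add[OF assms] dP_diff[OF assms] dP_mult[OF assms]
  by (intro allI DERIV_add DERIV_diff DERIV_mult' p_differentiableD assms)+

lemma p_differentiable_divide_const: "p_differentiable F \<Longrightarrow> p_differentiable (\<lambda>p t. F p t / c)"
  unfolding p_differentiable_def[of "\<lambda>p t. F p t / c"] dP_divide_const
  by (intro allI DERIV_cdivide p_differentiableD)

lemma dP_pair:
  assumes "p_differentiable F" "p_differentiable G"
  shows "dP (\<lambda>p t. (F p t, G p t)) = (\<lambda>p t. (dP F p t, dP G p t))"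
  using assms[THEN p_differentiableD]
  by (intro ext dP_eqI_vector has_vector_derivative_Pair)
    (simp_all add: has_real_derivative_iff_has_vector_derivative)

lemma dT_pair:
  assumes "smooth2 F" "smooth2 G"
  shows "dT (\<lambda>p t. (F p t, G p t)) p t = (dT F p t, dT G p t)"
  using assms[THEN smooth2_has_dT]
  by (intro dT_eqI_vector has_vector_derivative_Pair)
    (simp_all add: has_real_derivative_iff_has_vector_derivative)

lemma dP_periodic:
  assumes "\<And>p t. F (p + c) t = F p t" "p_differentiable F"
  shows "dP F (p + c) t = dP F p t"
proof -
  have "((\<lambda>q. F (q + c) t) has_real_derivative dP F (p + c) t) (at p)"
    using p_differentiableD[OF assms(2), of t "p + c"] by (simp add: DERIV_shift)
  then show ?thesis
    by (simp add: assms(1) dP_eqI)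
qed

lemma sint_eq_integral_diff:
  assumes "continuous_on UNIV k" "a \<le> x" "a \<le> y"
  shows "sint x y k = integral {a..y} k - integral {a..x} k"
proof -
  have "k integrable_on {u..v}" for u v
    using assms(1) by (intro integrable_continuous_real) (auto intro: continuous_on_subset)
  then show ?thesis
    using Henstock_Kurzweil_Integration.integral_combine[OF assms(2), of y k]
      Henstock_Kurzweil_Integration.integral_combine[OF assms(3), of x k]
    by (cases "x \<le> y") (auto simp: sint_def)
qed

lemma sint_has_real_derivative:
  assumes "continuous_on UNIV k"
  shows "((\<lambda>q. sint x0 q k) has_real_derivative k p) (at p)"
proof -
  define a where "a = min x0 p - 1"
  have "((\<lambda>u. integral {a..u} k) has_real_derivative k p) (at p within {a..p + 1})"
    using assms by (intro integral_has_real_derivative) (auto simp: a_def intro: continuous_on_subset)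
  then have "((\<lambda>u. integral {a..u} k) has_real_derivative k p) (at p)"
    by (subst (asm) at_within_interior[of p]) (auto simp: a_def)
  then have "((\<lambda>u. integral {a..u} k - integral {a..x0} k) has_real_derivative k p) (at p)"
    using DERIV_diff[OF _ DERIV_const] by fastforce
  then show ?thesis
  proof (rule has_field_derivative_transform_within_open[of _ _ _ "{a<..}"])
    show "integral {a..u} k - integral {a..x0} k = sint x0 u k" if "u \<in> {a<..}" for u
      using that sint_eq_integral_diff[OF assms, of a x0 u] by (simp add: a_def)
  qed (auto simp: a_def)
qed

section \<open>Calculus at a maximum\<close>

lemma periodic_reduce:
  fixes h :: "real \<Rightarrow> 'a"
  assumes per: "\<And>p. h (p + c) = h p" and "c > 0"
  obtains q where "q \<in> {0..c}" "h q = h p"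
proof -
  define k where "k = \<lfloor>p / c\<rfloor>"
  have "h (p - of_int k * c) = h p"
  proof (induction k rule: int_induct[where k = 0])
    case (step1 i)
    then show ?case
      using per[of "p - of_int (i + 1) * c"] by (simp add: algebra_simps)
  next
    case (step2 i)
    then show ?case
      using per[of "p - of_int i * c"] by (simp add: algebra_simps)
  qed simp
  moreover have "of_int k * c \<le> p" "p < (of_int k + 1) * c"
    using \<open>c > 0\<close> floor_divide_lower floor_divide_upper by (auto simp: k_def)
  ultimately show ?thesis
    by (intro that[of "p - of_int k * c"]) (auto simp: algebra_simps)
qed

lemma DERIV_nonneg_at_left_max:
  assumes "(f has_real_derivative l) (at x)" "a < x"
    and "\<And>y. a \<le> y \<Longrightarrow> y \<le> x \<Longrightarrow> f y \<le> f x"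
  shows "l \<ge> 0"
proof (rule ccontr)
  assume "\<not> l \<ge> 0"
  then obtain e where e: "e > 0" "\<And>h. h > 0 \<Longrightarrow> h < e \<Longrightarrow> f x < f (x - h)"
    using DERIV_neg_dec_left[OF assms(1)] by force
  define h where "h = min e (x - a) / 2"
  have h: "0 < h" "h < e" "h \<le> x - a"
    using e(1) assms(2) by (auto simp: h_def)
  then have "f x < f (x - h)"
    by (intro e(2))
  moreover have "f (x - h) \<le> f x"
    using h by (intro assms(3)) auto
  ultimately show False
    by simp
qed

lemma DERIV_at_global_max:
  assumes d1: "\<And>y. (f has_real_derivative f' y) (at y)"
    and d2: "(f' has_real_derivative l) (at x)"
    and max: "\<And>y. f y \<le> f x"
  shows "f' x = 0" "l \<le> 0"
proof -
  show "f' x = 0"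
    by (rule DERIV_local_max[OF d1[of x], of 1]) (use max in auto)
  show "l \<le> 0"
  proof (rule ccontr)
    assume "\<not> l \<le> 0"
    then obtain e where e: "e > 0" "\<And>h. h > 0 \<Longrightarrow> h < e \<Longrightarrow> f' x < f' (x + h)"
      using DERIV_pos_inc_right[OF d2] by force
    obtain z where z: "x < z" "z < x + e / 2" "f (x + e / 2) - f x = e / 2 * f' z"
      using MVT2[of x "x + e / 2" f f'] e(1) d1 by auto
    have "f' z > 0"
      using e(2)[of "z - x"] z \<open>f' x = 0\<close> by simp
    then have "e / 2 * f' z > 0"
      using e(1) by simp
    then show False
      using z(3) max[of "x + e / 2"] by linarith
  qed
qed

lemma DERIV_at_global_max_reparam:
  assumes df: "\<And>y. (f has_real_derivative a y * z y) (at y)"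
    and da: "(a has_real_derivative a') (at x)"
    and dz: "(z has_real_derivative a x * z') (at x)"
    and pos: "a x > 0" and max: "\<And>y. f y \<le> f x"
  shows "z x = 0" "z' \<le> 0"
proof -
  have "a x * z x = 0" "a x * (a x * z') + a' * z x \<le> 0"
    using DERIV_at_global_max[OF df DERIV_mult'[OF da dz] max] by simp_all
  then show "z x = 0" "z' \<le> 0"
    using pos by (simp_all add: mult_le_0_iff)
qed

lemma periodic_slab_max:
  fixes w :: "real \<Rightarrow> real \<Rightarrow> real"
  assumes cont: "continuous_on UNIV (\<lambda>z. w (fst z) (snd z))"
    and per: "\<And>p t. w (p + c) t = w p t" and "c > 0" "a \<le> b"
  obtains ps ts where "a \<le> ts" "ts \<le> b" "\<And>p s. a \<le> s \<Longrightarrow> s \<le> b \<Longrightarrow> w p s \<le> w ps ts"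
proof -
  have "compact ({0..c} \<times> {a..b})" "{0..c} \<times> {a..b} \<noteq> {}"
    using assms by (auto intro: compact_Times)
  then obtain z where z: "z \<in> {0..c} \<times> {a..b}"
    and max: "\<And>y. y \<in> {0..c} \<times> {a..b} \<Longrightarrow> w (fst y) (snd y) \<le> w (fst z) (snd z)"
    using continuous_attains_sup[of _ "\<lambda>z. w (fst z) (snd z)"] continuous_on_subset[OF cont]
    by (metis subset_UNIV)
  have "w p s \<le> w (fst z) (snd z)" if "a \<le> s" "s \<le> b" for p s
  proof -
    obtain q where "q \<in> {0..c}" "w q s = w p s"
      using periodic_reduce[of "\<lambda>q. w q s" c p] per \<open>c > 0\<close> by blast
    then show ?thesis
      using max[of "(q, s)"] that by auto
  qed
  then show ?thesis
    using z by (intro that[of "snd z" "fst z"]) auto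
qed

text \<open>For \<open>w = \<psi> u\<^sup>2 + K v\<^sup>2\<close> with \<open>u = \<phi>\<^sub>\<xi>\<^sup>m\<^sup>+\<^sup>1\<close>,
  \<open>v = \<phi>\<^sub>\<xi>\<^sup>m\<close>, \<open>u\<^sub>t = u\<^sub>\<xi>\<^sub>\<xi>/2 + q\<close> and \<open>v\<^sub>t = v\<^sub>\<xi>\<^sub>\<xi>/2 + q'\<close>, the hypotheses \<open>time\<close> and \<open>space\<close> say
  \<open>w\<^sub>t \<ge> 0\<close> and \<open>w\<^sub>\<xi>\<^sub>\<xi>/2 \<le> 0\<close>. In their difference the highest derivatives cancel, and
  \<open>K = 2A + 2\<close> lets the term \<open>-K u\<^sup>2\<close> absorb the part of \<open>q\<close> that is linear in \<open>u\<close>.\<close>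

lemma square_bound_at_maximum:
  fixes u v u1 u2 q q' psi K A B M E :: real
  assumes psi: "0 < psi" "psi \<le> 1"
    and time: "0 \<le> u * u + 2 * psi * u * (u2 / 2 + q) + 2 * K * v * (u1 / 2 + q')"
    and space: "psi * (u1 * u1 + u * u2) + K * (u * u + v * u1) \<le> 0"
    and q: "\<bar>q\<bar> \<le> A * \<bar>u\<bar> + B" and v: "\<bar>v\<bar> \<le> M" and q': "\<bar>q'\<bar> \<le> E"
    and K: "K = 2 * A + 2" and "A \<ge> 0"
  shows "u * u \<le> 4 * (B * B) + 4 * (K * (M * E))"
proof -
  have "2 * psi * u * (u2 / 2 + q) + 2 * K * v * (u1 / 2 + q') - (psi * (u1 * u1 + u * u2) + K * (u * u + v * u1))
      = 2 * (psi * u * q) + 2 * (K * v * q') - psi * (u1 * u1) - K * (u * u)"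
    by (simp add: algebra_simps)
  then have diff: "0 \<le> u * u + 2 * (psi * u * q) + 2 * (K * v * q') - psi * (u1 * u1) - K * (u * u)"
    using time space by linarith
  have "psi * u * q \<le> \<bar>u * q\<bar>"
  proof -
    have "psi * (u * q) \<le> psi * \<bar>u * q\<bar>"
      using psi by (intro mult_left_mono) auto
    also have "\<dots> \<le> \<bar>u * q\<bar>"
      using psi by (intro mult_left_le_one_le) auto
    finally show ?thesis
      by (simp add: mult.assoc)
  qed
  also have "\<dots> \<le> \<bar>u\<bar> * (A * \<bar>u\<bar> + B)"
    unfolding abs_mult by (rule mult_left_mono[OF q abs_ge_zero])
  also have "\<dots> = A * (u * u) + B * \<bar>u\<bar>"
    by (simp add: algebra_simps abs_mult_self_eq)
  finally have uq: "psi * u * q \<le> A * (u * u) + B * \<bar>u\<bar>" .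
  have "v * q' \<le> \<bar>v\<bar> * \<bar>q'\<bar>"
    by (simp add: abs_mult[symmetric])
  also have "\<dots> \<le> M * E"
    using v by (intro mult_mono q') auto
  finally have vq: "K * v * q' \<le> K * (M * E)"
    using K \<open>A \<ge> 0\<close> by (simp add: mult.assoc mult_left_mono)
  have "psi * (u1 * u1) \<ge> 0"
    using psi by simp
  then have "u * u \<le> 2 * (B * \<bar>u\<bar>) + 2 * (K * (M * E))"
    using diff uq vq unfolding K by (simp add: distrib_right)
  moreover have "4 * (B * \<bar>u\<bar>) \<le> u * u + 4 * (B * B)"
    using sum_squares_ge_zero[of "\<bar>u\<bar> - 2 * B" 0]
    by (simp add: algebra_simps abs_mult_self_eq power2_eq_square)
  ultimately show ?thesis
    by linarith
qed

section \<open>Differential polynomials\<close>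

datatype dpoly = DVar nat | DConst real | DAdd dpoly dpoly | DMult dpoly dpoly

primrec dpoly_eval :: "(nat \<Rightarrow> real \<Rightarrow> real \<Rightarrow> real) \<Rightarrow> dpoly \<Rightarrow> real \<Rightarrow> real \<Rightarrow> real" where
  "dpoly_eval \<Phi> (DVar j) p t = \<Phi> j p t"
| "dpoly_eval \<Phi> (DConst c) p t = c"
| "dpoly_eval \<Phi> (DAdd a b) p t = dpoly_eval \<Phi> a p t + dpoly_eval \<Phi> b p t"
| "dpoly_eval \<Phi> (DMult a b) p t = dpoly_eval \<Phi> a p t * dpoly_eval \<Phi> b p t"

primrec dpoly_deriv :: "dpoly \<Rightarrow> dpoly" where
  "dpoly_deriv (DVar j) = DVar (Suc j)"
| "dpoly_deriv (DConst c) = DConst 0"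
| "dpoly_deriv (DAdd a b) = DAdd (dpoly_deriv a) (dpoly_deriv b)"
| "dpoly_deriv (DMult a b) = DAdd (DMult (dpoly_deriv a) b) (DMult a (dpoly_deriv b))"

primrec dpoly_order :: "dpoly \<Rightarrow> nat" where
  "dpoly_order (DVar j) = j"
| "dpoly_order (DConst c) = 0"
| "dpoly_order (DAdd a b) = max (dpoly_order a) (dpoly_order b)"
| "dpoly_order (DMult a b) = max (dpoly_order a) (dpoly_order b)"

primrec dpoly_bound :: "dpoly \<Rightarrow> real \<Rightarrow> real" where
  "dpoly_bound (DVar j) M = M"
| "dpoly_bound (DConst c) M = \<bar>c\<bar>"
| "dpoly_bound (DAdd a b) M = dpoly_bound a M + dpoly_bound b M"
| "dpoly_bound (DMult a b) M = dpoly_bound a M * dpoly_bound b M"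

lemma dpoly_order_deriv: "dpoly_order (dpoly_deriv e) \<le> Suc (dpoly_order e)"
  by (induction e) auto

lemma abs_dpoly_eval_le:
  assumes "dpoly_order e \<le> m" "\<And>j. j \<le> m \<Longrightarrow> \<bar>\<Phi> j p t\<bar> \<le> M"
  shows "\<bar>dpoly_eval \<Phi> e p t\<bar> \<le> dpoly_bound e M"
  using assms
proof (induction e)
  case (DAdd a b)
  then show ?case
    using abs_triangle_ineq[of "dpoly_eval \<Phi> a p t" "dpoly_eval \<Phi> b p t"] by simp
next
  case (DMult a b)
  then show ?case
    by (simp add: abs_mult mult_mono')
qed simp_all

lemma smooth2_dpoly_eval: "(\<And>j. smooth2 (\<Phi> j)) \<Longrightarrow> smooth2 (dpoly_eval \<Phi> e)"
proof (induction e)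
  case (DVar j)
  have "dpoly_eval \<Phi> (DVar j) = \<Phi> j"
    by (intro ext) simp
  then show ?case
    using DVar by simp
next
  case (DConst c)
  have "dpoly_eval \<Phi> (DConst c) = (\<lambda>p t. c)"
    by (intro ext) simp
  then show ?case
    by (simp add: smooth2_const)
next
  case (DAdd a b)
  then show ?case
    using smooth2_add[of "dpoly_eval \<Phi> a" "dpoly_eval \<Phi> b"] by simp
next
  case (DMult a b)
  then show ?case
    using smooth2_mult[of "dpoly_eval \<Phi> a" "dpoly_eval \<Phi> b"] by simp
qed

section \<open>The centro-affine flow\<close>

lemma decompose_in_frame:
  fixes x1 x2 T1 T2 N1 N2 :: real
  assumes d: "d = T1 * x2 - T2 * x1" "d \<noteq> 0" and W: "N2 * T1 - N1 * T2 = - d"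
  shows "N1 = - x1 + (N1 * x2 - N2 * x1) / d * T1" "N2 = - x2 + (N1 * x2 - N2 * x1) / d * T2"
proof -
  have "N1 * d - (- x1 * d + (N1 * x2 - N2 * x1) * T1) = x1 * ((N2 * T1 - N1 * T2) + d)"
    "N2 * d - (- x2 * d + (N1 * x2 - N2 * x1) * T2) = x2 * ((N2 * T1 - N1 * T2) + d)"
    unfolding d(1) by (simp_all add: algebra_simps)
  then have "N1 * d = - x1 * d + (N1 * x2 - N2 * x1) * T1" "N2 * d = - x2 * d + (N1 * x2 - N2 * x1) * T2"
    unfolding W by simp_all
  then show "N1 = - x1 + (N1 * x2 - N2 * x1) / d * T1" "N2 = - x2 + (N1 * x2 - N2 * x1) / d * T2"
    using d(2) by (simp_all add: field_simps)
qed

lemma linear_combination_zero: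
  fixes a b u1 u2 v1 v2 :: real
  assumes "a * u1 + b * v1 = 0" "a * u2 + b * v2 = 0" "v1 * u2 - v2 * u1 \<noteq> 0"
  shows "a = 0" "b = 0"
proof -
  have "a * (v1 * u2 - v2 * u1) = v1 * (a * u2 + b * v2) - v2 * (a * u1 + b * v1)"
    by (simp add: algebra_simps)
  then show "a = 0"
    using assms by simp
  have "b * (v1 * u2 - v2 * u1) = u2 * (a * u1 + b * v1) - u1 * (a * u2 + b * v2)"
    by (simp add: algebra_simps)
  then show "b = 0"
    using assms by (simp del: mult_eq_0_iff)
qed

locale centro_affine_flow =
  fixes C :: "real \<Rightarrow> real \<Rightarrow> real \<times> real" and lam p0 :: real
  assumes smooth: "smooth_curve_family C"
    and closed: "\<forall>p t. C (p + 2 * pi) t = C p t"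
    and nondeg1: "\<forall>p t. det2 (C p t) (dP C p t) \<noteq> 0"
    and pos: "\<forall>p t. det2 (dP C p t) (dP (dP C) p t) / det2 (C p t) (dP C p t) > 0"
    and flow: "\<forall>p t. dT C p t =
                 (lam + ca_nonlocal C p0 p t) *\<^sub>R C p t + (ca_curv C p t / 2) *\<^sub>R dXi C C p t"
begin

definition "x1 = (\<lambda>p t. fst (C p t))"
definition "x2 = (\<lambda>p t. snd (C p t))"

lemma smooth2_x1: "smooth2 x1" and smooth2_x2: "smooth2 x2"
  using smooth by (simp_all add: smooth_curve_family_def x1_def x2_def)

lemma C_eq: "C = (\<lambda>p t. (x1 p t, x2 p t))"
  by (simp add: x1_def x2_def)

lemma dP_C: "dP C = (\<lambda>p t. (dP x1 p t, dP x2 p t))"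
  by (subst C_eq) (intro dP_pair smooth2_p_differentiable smooth2_x1 smooth2_x2)

lemma dP_dP_C: "dP (dP C) = (\<lambda>p t. (dP (dP x1) p t, dP (dP x2) p t))"
  unfolding dP_C by (intro dP_pair smooth2_p_differentiable smooth2_dP smooth2_x1 smooth2_x2)

definition "det_CCp = (\<lambda>p t. x1 p t * dP x2 p t - x2 p t * dP x1 p t)"
definition "det_CpCpp = (\<lambda>p t. dP x1 p t * dP (dP x2) p t - dP x2 p t * dP (dP x1) p t)"

lemma det2_C_Cp: "det2 (C p t) (dP C p t) = det_CCp p t"
  by (subst (1) C_eq) (simp add: dP_C det2_def det_CCp_def)

lemma det2_Cp_Cpp: "det2 (dP C p t) (dP (dP C) p t) = det_CpCpp p t"
  unfolding dP_dP_C by (simp add: dP_C det2_def det_CpCpp_def)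

lemma det_CCp_nonzero: "det_CCp p t \<noteq> 0"
  using nondeg1 det2_C_Cp by metis

lemma det_ratio_pos: "det_CpCpp p t / det_CCp p t > 0"
  using pos det2_C_Cp det2_Cp_Cpp by metis

lemma smooth2_det_CCp: "smooth2 det_CCp" and smooth2_det_CpCpp: "smooth2 det_CpCpp"
  unfolding det_CCp_def det_CpCpp_def
  by (intro smooth2_diff smooth2_mult smooth2_dP smooth2_x1 smooth2_x2)+

definition "g = (\<lambda>p t. sqrt (det_CpCpp p t / det_CCp p t))"

lemma ca_metric_eq: "ca_metric C = g"
  by (intro ext) (simp add: ca_metric_def g_def det2_C_Cp det2_Cp_Cpp)

lemma g_pos: "g p t > 0"
  using det_ratio_pos by (simp add: g_def)

lemma g_nonzero: "g p t \<noteq> 0"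
  using g_pos[of p t] by simp

lemma g_square: "g p t * g p t * det_CCp p t = det_CpCpp p t"
proof -
  have "g p t * g p t = det_CpCpp p t / det_CCp p t"
    unfolding g_def real_sqrt_mult_self using det_ratio_pos[of p t] by (rule abs_of_pos)
  then show ?thesis
    using det_CCp_nonzero[of p t] by simp
qed

lemma smooth2_g: "smooth2 g"
  unfolding g_def
  by (intro smooth2_sqrt smooth2_divide smooth2_det_CCp smooth2_det_CpCpp)
    (simp_all add: det_CCp_nonzero det_ratio_pos)

definition Dxi :: "(real \<Rightarrow> real \<Rightarrow> real) \<Rightarrow> real \<Rightarrow> real \<Rightarrow> real" where
  "Dxi F = (\<lambda>p t. dP F p t / g p t)"

lemma dXi_eq_Dxi: "dXi C F = Dxi F"
  by (intro ext) (simp add: dXi_def Dxi_def ca_metric_eq divide_inverse mult.commute)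

lemma smooth2_Dxi: "smooth2 F \<Longrightarrow> smooth2 (Dxi F)"
  unfolding Dxi_def by (intro smooth2_divide smooth2_dP smooth2_g) (simp_all add: g_nonzero)

lemma Dxi_add:
  "p_differentiable F \<Longrightarrow> p_differentiable G \<Longrightarrow> Dxi (\<lambda>p t. F p t + G p t) = (\<lambda>p t. Dxi F p t + Dxi G p t)"
  by (simp add: Dxi_def dP_add add_divide_distrib)

lemma Dxi_mult:
  "p_differentiable F \<Longrightarrow> p_differentiable G \<Longrightarrow>
    Dxi (\<lambda>p t. F p t * G p t) = (\<lambda>p t. F p t * Dxi G p t + Dxi F p t * G p t)"
  by (simp add: Dxi_def dP_mult add_divide_distrib)

lemma Dxi_const: "Dxi (\<lambda>p t. c) = (\<lambda>p t. 0)"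
  by (simp add: Dxi_def dP_const)

lemma Dxi_divide_const: "p_differentiable F \<Longrightarrow> Dxi (\<lambda>p t. F p t / c) = (\<lambda>p t. Dxi F p t / c)"
  by (simp add: Dxi_def dP_divide_const mult.commute)

lemma dXi_C: "dXi C C = (\<lambda>p t. (Dxi x1 p t, Dxi x2 p t))"
  by (intro ext) (simp add: dXi_def dP_C Dxi_def ca_metric_eq divide_inverse mult.commute)

lemma dXi_dXi_C: "dXi C (dXi C C) = (\<lambda>p t. (Dxi (Dxi x1) p t, Dxi (Dxi x2) p t))"
proof -
  have "dP (dXi C C) = (\<lambda>p t. (dP (Dxi x1) p t, dP (Dxi x2) p t))"
    unfolding dXi_C by (intro dP_pair smooth2_p_differentiable smooth2_Dxi smooth2_x1 smooth2_x2)
  then show ?thesis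
    by (intro ext) (simp add: dXi_def Dxi_def ca_metric_eq divide_inverse mult.commute)
qed

definition "det_CxiC = (\<lambda>p t. Dxi x1 p t * x2 p t - Dxi x2 p t * x1 p t)"

lemma det_CxiC_eq: "det_CxiC p t = - det_CCp p t / g p t"
  by (simp add: det_CxiC_def det_CCp_def Dxi_def g_nonzero field_simps)

lemma det_CxiC_nonzero: "det_CxiC p t \<noteq> 0"
  by (simp add: det_CxiC_eq det_CCp_nonzero g_nonzero)

definition "phi = (\<lambda>p t. (Dxi (Dxi x1) p t * x2 p t - Dxi (Dxi x2) p t * x1 p t) / det_CxiC p t)"

lemma ca_curv_eq: "ca_curv C = phi"
  unfolding ca_curv_def dXi_dXi_C
  by (intro ext) (simp add: dXi_C det2_def phi_def det_CxiC_def x1_def x2_def)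

lemma smooth2_phi: "smooth2 phi"
  unfolding phi_def det_CxiC_def
  by (intro smooth2_divide smooth2_diff smooth2_mult smooth2_Dxi smooth2_x1 smooth2_x2)
    (use det_CxiC_nonzero in \<open>simp add: det_CxiC_def\<close>)

lemma dP_Dxi:
  "smooth2 F \<Longrightarrow> dP (Dxi F) p t = (dP (dP F) p t * g p t - dP F p t * dP g p t) / (g p t * g p t)"
  unfolding Dxi_def by (intro dP_eqI DERIV_divide smooth2_has_dP smooth2_dP smooth2_g g_nonzero)

text \<open>\<open>\<xi>\<close> is the centro-affine arc-length exactly because \<open>[C\<^sub>\<xi>, C\<^sub>\<xi>\<^sub>\<xi>] = [C, C\<^sub>\<xi>]\<close>.\<close>

lemma det_Cxi_Cxixi: "Dxi (Dxi x2) p t * Dxi x1 p t - Dxi (Dxi x1) p t * Dxi x2 p t = - det_CxiC p t"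
proof -
  have "Dxi (Dxi x2) p t * Dxi x1 p t - Dxi (Dxi x1) p t * Dxi x2 p t
      = det_CpCpp p t / (g p t * g p t * g p t)"
    using g_nonzero[of p t]
    by (simp add: Dxi_def[of "Dxi _"] dP_Dxi smooth2_x1 smooth2_x2)
      (simp add: Dxi_def det_CpCpp_def field_simps)
  also have "\<dots> = det_CCp p t / g p t"
    using g_nonzero[of p t] by (simp add: g_square[symmetric] field_simps)
  finally show ?thesis
    by (simp add: det_CxiC_eq)
qed

lemma Cxixi_eq:
  "Dxi (Dxi x1) p t = - x1 p t + phi p t * Dxi x1 p t"
  "Dxi (Dxi x2) p t = - x2 p t + phi p t * Dxi x2 p t"
  using decompose_in_frame[OF _ det_CxiC_nonzero det_Cxi_Cxixi]
  by (simp_all add: phi_def det_CxiC_def)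

definition "radial_coeff = (\<lambda>p t. lam + ca_nonlocal C p0 p t)"

lemma radial_coeff_has_dP: "((\<lambda>q. radial_coeff q t) has_real_derivative phi p t * g p t) (at p)"
proof -
  have "continuous_on UNIV (\<lambda>q. phi q t * g q t)"
    by (intro continuous_on_mult smooth2_continuous_on_slice smooth2_phi smooth2_g)
  then show ?thesis
    unfolding radial_coeff_def ca_nonlocal_def ca_curv_eq ca_metric_eq
    using DERIV_add[OF DERIV_const sint_has_real_derivative] by fastforce
qed

lemma p_differentiable_radial_coeff: "p_differentiable radial_coeff"
  and Dxi_radial_coeff: "Dxi radial_coeff = phi"
  using dP_eq_funI[of radial_coeff "\<lambda>p t. phi p t * g p t", OF radial_coeff_has_dP] radial_coeff_has_dP
  by (auto simp: p_differentiable_def Dxi_def g_nonzero)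

lemma flow_x1: "dT x1 p t = radial_coeff p t * x1 p t + phi p t / 2 * Dxi x1 p t"
  and flow_x2: "dT x2 p t = radial_coeff p t * x2 p t + phi p t / 2 * Dxi x2 p t"
proof -
  have "dT C p t = (dT x1 p t, dT x2 p t)"
    by (subst C_eq) (intro dT_pair smooth2_x1 smooth2_x2)
  moreover have "dT C p t = (radial_coeff p t * x1 p t + phi p t / 2 * Dxi x1 p t,
      radial_coeff p t * x2 p t + phi p t / 2 * Dxi x2 p t)"
    using flow by (simp add: radial_coeff_def ca_curv_eq dXi_C x1_def x2_def prod_eq_iff)
  ultimately show "dT x1 p t = radial_coeff p t * x1 p t + phi p t / 2 * Dxi x1 p t"
    "dT x2 p t = radial_coeff p t * x2 p t + phi p t / 2 * Dxi x2 p t"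
    by simp_all
qed

definition "metric_rate = (\<lambda>p t. dT g p t / g p t)"

lemma dT_Dxi: "smooth2 F \<Longrightarrow> dT (Dxi F) p t = Dxi (dT F) p t - metric_rate p t * Dxi F p t"
proof -
  assume F: "smooth2 F"
  have "dT (Dxi F) p t = (dT (dP F) p t * g p t - dP F p t * dT g p t) / (g p t * g p t)"
    unfolding Dxi_def by (intro dT_eqI DERIV_divide smooth2_has_dT smooth2_dP F smooth2_g g_nonzero)
  then show ?thesis
    using g_nonzero[of p t]
    by (simp add: smooth2_dP_dT_commute[OF F, symmetric] Dxi_def metric_rate_def field_simps)
qed

lemma smooth2_metric_rate: "smooth2 metric_rate"
  unfolding metric_rate_def by (intro smooth2_divide smooth2_dT smooth2_g) (simp_all add: g_nonzero)

definition "tangent_rate =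
  (\<lambda>p t. radial_coeff p t + Dxi phi p t / 2 + phi p t * phi p t / 2 - metric_rate p t)"

lemma p_differentiable_tangent_rate: "p_differentiable tangent_rate"
proof -
  have "smooth2 (\<lambda>p t. Dxi phi p t / 2)" "smooth2 (\<lambda>p t. phi p t * phi p t / 2)"
    by (intro smooth2_divide_const smooth2_mult smooth2_Dxi smooth2_phi)+
  then show ?thesis
    unfolding tangent_rate_def
    by (intro p_differentiable_diff p_differentiable_add p_differentiable_radial_coeff
        smooth2_p_differentiable smooth2_metric_rate)
qed

lemma dT_Dxi_coordinate:
  assumes X: "smooth2 X"
    and frame: "\<And>p t. Dxi (Dxi X) p t = - X p t + phi p t * Dxi X p t"
    and flowX: "\<And>p t. dT X p t = radial_coeff p t * X p t + phi p t / 2 * Dxi X p t"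
  shows "dT (Dxi X) p t = phi p t / 2 * X p t + tangent_rate p t * Dxi X p t"
proof -
  have pX: "p_differentiable X" and pT: "p_differentiable (Dxi X)"
    and pA: "p_differentiable (\<lambda>p t. phi p t / 2)"
    by (intro smooth2_p_differentiable smooth2_Dxi smooth2_divide_const smooth2_phi X)+
  have "dT X = (\<lambda>p t. radial_coeff p t * X p t + phi p t / 2 * Dxi X p t)"
    by (intro ext flowX)
  then have "Dxi (dT X) = (\<lambda>p t. (radial_coeff p t * Dxi X p t + Dxi radial_coeff p t * X p t)
      + (phi p t / 2 * Dxi (Dxi X) p t + Dxi (\<lambda>p t. phi p t / 2) p t * Dxi X p t))"
    by (simp only: Dxi_add[OF p_differentiable_mult[OF p_differentiable_radial_coeff pX]
          p_differentiable_mult[OF pA pT]] Dxi_mult[OF p_differentiable_radial_coeff pX] Dxi_mult[OF pA pT])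
  then show ?thesis
    using dT_Dxi[OF X, of p t] frame[of p t]
    by (simp add: Dxi_radial_coeff Dxi_divide_const smooth2_p_differentiable smooth2_phi
        tangent_rate_def field_simps)
qed

text \<open>The compatibility condition \<open>\<partial>\<^sub>t C\<^sub>\<xi>\<^sub>\<xi> = \<partial>\<^sub>\<xi> \<partial>\<^sub>t C\<^sub>\<xi> - (g\<^sub>t/g) C\<^sub>\<xi>\<^sub>\<xi>\<close>, with both sides expanded
  in the frame \<open>C, C\<^sub>\<xi>\<close> (one coordinate at a time).\<close>

lemma compatibility_coordinate:
  assumes X: "smooth2 X"
    and frame: "\<And>p t. Dxi (Dxi X) p t = - X p t + phi p t * Dxi X p t"
    and flowX: "\<And>p t. dT X p t = radial_coeff p t * X p t + phi p t / 2 * Dxi X p t"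
  shows "(phi p t * phi p t - 2 * metric_rate p t) * X p t
      + (dT phi p t - phi p t - Dxi tangent_rate p t + metric_rate p t * phi p t) * Dxi X p t = 0"
proof -
  have T: "smooth2 (Dxi X)"
    by (rule smooth2_Dxi[OF X])
  have pX: "p_differentiable X" and pT: "p_differentiable (Dxi X)"
    and pA: "p_differentiable (\<lambda>p t. phi p t / 2)"
    by (intro smooth2_p_differentiable smooth2_Dxi smooth2_divide_const smooth2_phi X)+
  have dTT: "dT (Dxi X) = (\<lambda>p t. phi p t / 2 * X p t + tangent_rate p t * Dxi X p t)"
    by (intro ext dT_Dxi_coordinate[OF X frame flowX])
  have N: "Dxi (Dxi X) = (\<lambda>p t. - X p t + phi p t * Dxi X p t)"
    by (intro ext frame)
  have "dT (Dxi (Dxi X)) p t = - dT X p t + (phi p t * dT (Dxi X) p t + dT phi p t * Dxi X p t)"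
    unfolding N dT_add[OF smooth2_minus[OF X] smooth2_mult[OF smooth2_phi T]] dT_minus[OF X]
      dT_mult[OF smooth2_phi T] by (rule refl)
  moreover have "dT (Dxi (Dxi X)) p t = (phi p t / 2 * Dxi X p t + Dxi (\<lambda>p t. phi p t / 2) p t * X p t)
      + (tangent_rate p t * Dxi (Dxi X) p t + Dxi tangent_rate p t * Dxi X p t)
      - metric_rate p t * Dxi (Dxi X) p t"
    unfolding dT_Dxi[OF T] dTT
    by (simp only: Dxi_add[OF p_differentiable_mult[OF pA pX] p_differentiable_mult[OF p_differentiable_tangent_rate pT]]
        Dxi_mult[OF pA pX] Dxi_mult[OF p_differentiable_tangent_rate pT])
  ultimately show ?thesis
    using flowX[of p t] dTT frame[of p t]
    by (simp add: Dxi_divide_const smooth2_p_differentiable smooth2_phi tangent_rate_def algebra_simps)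
qed

lemma metric_rate_eq: "metric_rate p t = phi p t * phi p t / 2"
  and dT_phi_eq: "dT phi p t = phi p t + Dxi tangent_rate p t - metric_rate p t * phi p t"
proof -
  have "v1 * u2 - v2 * u1 \<noteq> 0" if "v1 = Dxi x1 p t" "v2 = Dxi x2 p t" "u1 = x1 p t" "u2 = x2 p t"
    for u1 u2 v1 v2
    using that det_CxiC_nonzero[of p t] by (simp add: det_CxiC_def)
  then have "phi p t * phi p t - 2 * metric_rate p t = 0"
    "dT phi p t - phi p t - Dxi tangent_rate p t + metric_rate p t * phi p t = 0"
    using linear_combination_zero[OF
        compatibility_coordinate[OF smooth2_x1 Cxixi_eq(1) flow_x1]
        compatibility_coordinate[OF smooth2_x2 Cxixi_eq(2) flow_x2]] by blast+
  then show "metric_rate p t = phi p t * phi p t / 2"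
    "dT phi p t = phi p t + Dxi tangent_rate p t - metric_rate p t * phi p t"
    by simp_all
qed

lemma dT_Dxi_eq: "smooth2 F \<Longrightarrow> dT (Dxi F) p t = Dxi (dT F) p t - phi p t * phi p t / 2 * Dxi F p t"
  by (simp add: dT_Dxi metric_rate_eq)

lemma phi_evolution: "dT phi p t = Dxi (Dxi phi) p t / 2 + 2 * phi p t - phi p t * phi p t * phi p t / 2"
proof -
  have "tangent_rate = (\<lambda>p t. radial_coeff p t + Dxi phi p t / 2)"
    by (intro ext) (simp add: tangent_rate_def metric_rate_eq)
  then have "Dxi tangent_rate p t = phi p t + Dxi (Dxi phi) p t / 2"
    by (simp add: Dxi_add Dxi_divide_const Dxi_radial_coeff p_differentiable_radial_coeff
        p_differentiable_divide_const smooth2_p_differentiable smooth2_Dxi smooth2_phi)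
  then show ?thesis
    by (simp add: dT_phi_eq metric_rate_eq algebra_simps)
qed

definition "phi_deriv n = (Dxi ^^ n) phi"

lemma phi_deriv_0: "phi_deriv 0 = phi"
  by (simp add: phi_deriv_def)

lemma phi_deriv_Suc: "phi_deriv (Suc n) = Dxi (phi_deriv n)"
  by (simp add: phi_deriv_def)

lemma smooth2_phi_deriv: "smooth2 (phi_deriv n)"
  by (induction n) (simp_all add: phi_deriv_0 phi_deriv_Suc smooth2_phi smooth2_Dxi)

lemma ca_curv_deriv_eq: "ca_curv_deriv C n = phi_deriv n"
proof -
  have "dXi C = Dxi"
    by (rule ext) (rule dXi_eq_Dxi)
  then show ?thesis
    by (simp add: ca_curv_deriv_def phi_deriv_def ca_curv_eq)
qed

lemma Dxi_dpoly_eval: "Dxi (dpoly_eval phi_deriv e) = dpoly_eval phi_deriv (dpoly_deriv e)"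
proof (induction e)
  case (DVar j)
  have "dpoly_eval phi_deriv (DVar j) = phi_deriv j" "dpoly_eval phi_deriv (DVar (Suc j)) = phi_deriv (Suc j)"
    by (intro ext, simp)+
  then show ?case
    by (simp add: phi_deriv_Suc)
next
  case (DConst c)
  have "dpoly_eval phi_deriv (DConst c) = (\<lambda>p t. c)" "dpoly_eval phi_deriv (DConst 0) = (\<lambda>p t. 0)"
    by (intro ext, simp)+
  then show ?case
    by (simp add: Dxi_const)
next
  case (DAdd a b)
  have "p_differentiable (dpoly_eval phi_deriv a)" "p_differentiable (dpoly_eval phi_deriv b)"
    by (intro smooth2_p_differentiable smooth2_dpoly_eval smooth2_phi_deriv)+
  moreover have "dpoly_eval phi_deriv (DAdd a b) = (\<lambda>p t. dpoly_eval phi_deriv a p t + dpoly_eval phi_deriv b p t)"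
    "dpoly_eval phi_deriv (dpoly_deriv (DAdd a b))
      = (\<lambda>p t. dpoly_eval phi_deriv (dpoly_deriv a) p t + dpoly_eval phi_deriv (dpoly_deriv b) p t)"
    by (intro ext, simp)+
  ultimately show ?case
    by (simp add: Dxi_add DAdd.IH)
next
  case (DMult a b)
  have "p_differentiable (dpoly_eval phi_deriv a)" "p_differentiable (dpoly_eval phi_deriv b)"
    by (intro smooth2_p_differentiable smooth2_dpoly_eval smooth2_phi_deriv)+
  moreover have "dpoly_eval phi_deriv (DMult a b) = (\<lambda>p t. dpoly_eval phi_deriv a p t * dpoly_eval phi_deriv b p t)"
    "dpoly_eval phi_deriv (dpoly_deriv (DMult a b))
      = (\<lambda>p t. dpoly_eval phi_deriv (dpoly_deriv a) p t * dpoly_eval phi_deriv b p t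
          + dpoly_eval phi_deriv a p t * dpoly_eval phi_deriv (dpoly_deriv b) p t)"
    by (intro ext, simp)+
  ultimately show ?case
    by (simp add: Dxi_mult DMult.IH add.commute)
qed

definition "lower_terms n = (\<lambda>p t. dT (phi_deriv n) p t - phi_deriv (Suc (Suc n)) p t / 2)"

lemma smooth2_lower_terms: "smooth2 (lower_terms n)"
  unfolding lower_terms_def by (intro smooth2_diff smooth2_dT smooth2_divide_const smooth2_phi_deriv)

lemma lower_terms_0: "lower_terms 0 p t = 2 * phi p t - phi p t * phi p t * phi p t / 2"
  by (simp add: lower_terms_def phi_deriv_Suc phi_deriv_0 phi_evolution)

lemma lower_terms_Suc:
  "lower_terms (Suc n) p t = Dxi (lower_terms n) p t - phi p t * phi p t / 2 * phi_deriv (Suc n) p t"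
proof -
  have "dT (phi_deriv n) = (\<lambda>p t. phi_deriv (Suc (Suc n)) p t / 2 + lower_terms n p t)"
    by (intro ext) (simp add: lower_terms_def)
  then have "Dxi (dT (phi_deriv n)) p t = phi_deriv (Suc (Suc (Suc n))) p t / 2 + Dxi (lower_terms n) p t"
    by (simp add: Dxi_add Dxi_divide_const p_differentiable_divide_const smooth2_p_differentiable
        smooth2_phi_deriv smooth2_lower_terms phi_deriv_Suc[of "Suc (Suc n)"])
  then show ?thesis
    using dT_Dxi_eq[OF smooth2_phi_deriv[of n], of p t] by (simp add: lower_terms_def phi_deriv_Suc)
qed

lemma lower_terms_0_dpoly:
  "lower_terms 0 = dpoly_eval phi_deriv
    (DAdd (DMult (DConst 2) (DVar 0)) (DMult (DConst (-1/2)) (DMult (DVar 0) (DMult (DVar 0) (DVar 0)))))"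
  by (intro ext) (simp add: lower_terms_0 phi_deriv_0 algebra_simps)

text \<open>For \<open>n \<ge> 1\<close> the evolution of \<open>\<phi>\<^sub>\<xi>\<^sup>n\<close> is linear in \<open>\<phi>\<^sub>\<xi>\<^sup>n\<close> modulo lower derivatives; this is
  what allows the induction on \<open>n\<close>.\<close>

lemma lower_terms_linear:
  "\<exists>a b. dpoly_order a \<le> m \<and> dpoly_order b \<le> m \<and>
    (\<forall>p t. lower_terms (Suc m) p t = dpoly_eval phi_deriv a p t * phi_deriv (Suc m) p t + dpoly_eval phi_deriv b p t)"
proof (induction m)
  case 0
  have "lower_terms 1 p t = (2 - 2 * phi p t * phi p t) * phi_deriv 1 p t" for p t
    using lower_terms_Suc[of 0 p t] by (simp add: lower_terms_0_dpoly Dxi_dpoly_eval phi_deriv_0 algebra_simps)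
  then show ?case
    by (intro exI[of _ "DAdd (DConst 2) (DMult (DConst (-2)) (DMult (DVar 0) (DVar 0)))"] exI[of _ "DConst 0"])
      (simp add: phi_deriv_0)
next
  case (Suc m)
  then obtain a b where ab: "dpoly_order a \<le> m" "dpoly_order b \<le> m"
    "\<And>p t. lower_terms (Suc m) p t = dpoly_eval phi_deriv a p t * phi_deriv (Suc m) p t + dpoly_eval phi_deriv b p t"
    by blast
  have "lower_terms (Suc m) = dpoly_eval phi_deriv (DAdd (DMult a (DVar (Suc m))) b)"
    by (intro ext) (simp add: ab(3))
  then have "lower_terms (Suc (Suc m)) p t
      = dpoly_eval phi_deriv (DAdd a (DMult (DConst (-1/2)) (DMult (DVar 0) (DVar 0)))) p t * phi_deriv (Suc (Suc m)) p t
        + dpoly_eval phi_deriv (DAdd (DMult (dpoly_deriv a) (DVar (Suc m))) (dpoly_deriv b)) p t" for p t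
    using lower_terms_Suc[of "Suc m" p t] by (simp add: Dxi_dpoly_eval phi_deriv_0 algebra_simps)
  moreover have "dpoly_order (dpoly_deriv a) \<le> Suc m" "dpoly_order (dpoly_deriv b) \<le> Suc m"
    using ab(1,2) dpoly_order_deriv[of a] dpoly_order_deriv[of b] by simp_all
  ultimately show ?case
    using ab(1) by (intro exI[of _ "DAdd a (DMult (DConst (-1/2)) (DMult (DVar 0) (DVar 0)))"]
        exI[of _ "DAdd (DMult (dpoly_deriv a) (DVar (Suc m))) (dpoly_deriv b)"]) auto
qed

lemma lower_terms_dpoly: "\<exists>e. dpoly_order e \<le> m \<and> (\<forall>p t. lower_terms m p t = dpoly_eval phi_deriv e p t)"
proof (cases m)
  case 0
  then show ?thesis
    using lower_terms_0_dpoly by (intro exI[of _ "DAdd (DMult (DConst 2) (DVar 0)) (DMult (DConst (-1/2)) (DMult (DVar 0) (DMult (DVar 0) (DVar 0))))"]) simp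
next
  case (Suc k)
  then obtain a b where "dpoly_order a \<le> k" "dpoly_order b \<le> k"
    "\<forall>p t. lower_terms m p t = dpoly_eval phi_deriv a p t * phi_deriv m p t + dpoly_eval phi_deriv b p t"
    using lower_terms_linear[of k] by blast
  then show ?thesis
    using Suc by (intro exI[of _ "DAdd (DMult a (DVar m)) b"]) auto
qed

lemma x_periodic: "x1 (p + 2 * pi) t = x1 p t" "x2 (p + 2 * pi) t = x2 p t"
  using closed by (simp_all add: x1_def x2_def)

lemma dP_x_periodic:
  "dP x1 (p + 2 * pi) t = dP x1 p t" "dP x2 (p + 2 * pi) t = dP x2 p t"
  "dP (dP x1) (p + 2 * pi) t = dP (dP x1) p t" "dP (dP x2) (p + 2 * pi) t = dP (dP x2) p t"
  by (intro dP_periodic[where c = "2 * pi"] x_periodic smooth2_p_differentiable smooth2_dP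
      smooth2_x1 smooth2_x2)+

lemma Dxi_periodic:
  assumes "\<And>p t. F (p + 2 * pi) t = F p t" "p_differentiable F"
  shows "Dxi F (p + 2 * pi) t = Dxi F p t"
  using dP_x_periodic by (simp add: Dxi_def g_def det_CCp_def det_CpCpp_def x_periodic dP_periodic[OF assms])

lemma phi_periodic: "phi (p + 2 * pi) t = phi p t"
proof -
  have T: "Dxi x1 (p + 2 * pi) t = Dxi x1 p t" "Dxi x2 (p + 2 * pi) t = Dxi x2 p t" for p t
    by (intro Dxi_periodic x_periodic smooth2_p_differentiable smooth2_x1 smooth2_x2)+
  have N: "Dxi (Dxi x1) (p + 2 * pi) t = Dxi (Dxi x1) p t" "Dxi (Dxi x2) (p + 2 * pi) t = Dxi (Dxi x2) p t"
    by (intro Dxi_periodic T smooth2_p_differentiable smooth2_Dxi smooth2_x1 smooth2_x2)+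
  show ?thesis
    by (simp add: phi_def det_CxiC_def x_periodic T N)
qed

lemma phi_deriv_periodic: "phi_deriv n (p + 2 * pi) t = phi_deriv n p t"
proof (induction n arbitrary: p t)
  case (Suc n)
  then show ?case
    unfolding phi_deriv_Suc by (intro Dxi_periodic smooth2_p_differentiable smooth2_phi_deriv)
qed (simp add: phi_deriv_0 phi_periodic)

lemma phi_deriv_has_dP: "((\<lambda>q. phi_deriv n q t) has_real_derivative g p t * phi_deriv (Suc n) p t) (at p)"
  using smooth2_has_dP[OF smooth2_phi_deriv[of n], of t p] g_nonzero[of p t]
  by (simp add: phi_deriv_Suc Dxi_def)

lemma phi_deriv_has_dT:
  "((\<lambda>s. phi_deriv n p s) has_real_derivative phi_deriv (Suc (Suc n)) p t / 2 + lower_terms n p t) (at t)"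
  using smooth2_has_dT[OF smooth2_phi_deriv[of n], of p t] by (simp add: lower_terms_def)

definition "weighted_square m K t0 =
  (\<lambda>q s. (s - t0 + 1) * (phi_deriv (Suc m) q s * phi_deriv (Suc m) q s) + K * (phi_deriv m q s * phi_deriv m q s))"

lemma weighted_square_has_dT:
  "((\<lambda>x. weighted_square m K t0 q x) has_real_derivative
     phi_deriv (Suc m) q s * phi_deriv (Suc m) q s
     + 2 * (s - t0 + 1) * phi_deriv (Suc m) q s * (phi_deriv (Suc (Suc (Suc m))) q s / 2 + lower_terms (Suc m) q s)
     + 2 * K * phi_deriv m q s * (phi_deriv (Suc (Suc m)) q s / 2 + lower_terms m q s)) (at s)"
  unfolding weighted_square_def
  by (rule derivative_eq_intros phi_deriv_has_dT refl | simp)+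

lemma weighted_square_has_dP:
  "((\<lambda>x. weighted_square m K t0 x s) has_real_derivative
     g q s * (2 * ((s - t0 + 1) * (phi_deriv (Suc m) q s * phi_deriv (Suc (Suc m)) q s)
       + K * (phi_deriv m q s * phi_deriv (Suc m) q s)))) (at q)"
  unfolding weighted_square_def
  by (rule derivative_eq_intros phi_deriv_has_dP refl | simp)+ (simp add: algebra_simps)

lemma weighted_square_interior_max:
  assumes ts: "t0 - 1 < ts" "ts \<le> t0"
    and max: "\<And>q s. t0 - 1 \<le> s \<Longrightarrow> s \<le> t0 \<Longrightarrow> weighted_square m K t0 q s \<le> weighted_square m K t0 ps ts"
    and M: "\<And>p t. \<bar>phi_deriv m p t\<bar> \<le> M"
    and A: "\<And>p t. \<bar>lower_terms (Suc m) p t\<bar> \<le> A * \<bar>phi_deriv (Suc m) p t\<bar> + B" "A \<ge> 0"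
    and E: "\<And>p t. \<bar>lower_terms m p t\<bar> \<le> E"
    and K: "K = 2 * A + 2"
  shows "phi_deriv (Suc m) ps ts * phi_deriv (Suc m) ps ts \<le> 4 * (B * B) + 4 * (K * (M * E))"
proof (rule square_bound_at_maximum[OF _ _ _ _ A(1) M E K A(2)])
  let ?d = "\<lambda>k q. phi_deriv k q ts"
  define psi where "psi = ts - t0 + 1"
  show psi: "0 < psi" "psi \<le> 1"
    using ts by (auto simp: psi_def)
  show "0 \<le> ?d (Suc m) ps * ?d (Suc m) ps
      + 2 * psi * ?d (Suc m) ps * (?d (Suc (Suc (Suc m))) ps / 2 + lower_terms (Suc m) ps ts)
      + 2 * K * ?d m ps * (?d (Suc (Suc m)) ps / 2 + lower_terms m ps ts)"
    unfolding psi_def using ts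
    by (intro DERIV_nonneg_at_left_max[OF weighted_square_has_dT, of "t0 - 1"] max) auto
  define z where "z q = 2 * (psi * (?d (Suc m) q * ?d (Suc (Suc m)) q) + K * (?d m q * ?d (Suc m) q))" for q
  define z' where "z' = 2 * (psi * (?d (Suc (Suc m)) ps * ?d (Suc (Suc m)) ps + ?d (Suc m) ps * ?d (Suc (Suc (Suc m))) ps)
      + K * (?d (Suc m) ps * ?d (Suc m) ps + ?d m ps * ?d (Suc (Suc m)) ps))"
  have df: "((\<lambda>q. weighted_square m K t0 q ts) has_real_derivative g q ts * z q) (at q)" for q
    using weighted_square_has_dP[of m K t0 ts q] by (simp only: z_def psi_def)
  have dz: "(z has_real_derivative g ps ts * z') (at ps)"
    unfolding z_def z'_def
    by (rule derivative_eq_intros phi_deriv_has_dP refl | simp)+ (simp add: algebra_simps)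
  have "z' \<le> 0"
    using ts by (intro DERIV_at_global_max_reparam(2)[OF df smooth2_has_dP[OF smooth2_g] dz g_pos] max) auto
  then show "psi * (?d (Suc (Suc m)) ps * ?d (Suc (Suc m)) ps + ?d (Suc m) ps * ?d (Suc (Suc (Suc m))) ps)
      + K * (?d (Suc m) ps * ?d (Suc m) ps + ?d m ps * ?d (Suc (Suc m)) ps) \<le> 0"
    by (simp add: z'_def)
qed

lemma square_le_square_of_abs_le: "\<bar>x\<bar> \<le> M \<Longrightarrow> x * x \<le> M * (M :: real)"
  using mult_mono[of "\<bar>x\<bar>" M "\<bar>x\<bar>" M] by (simp add: abs_mult_self_eq)

lemma phi_deriv_square_bound:
  assumes M: "\<And>p t. \<bar>phi_deriv m p t\<bar> \<le> M"
    and A: "\<And>p t. \<bar>lower_terms (Suc m) p t\<bar> \<le> A * \<bar>phi_deriv (Suc m) p t\<bar> + B" "A \<ge> 0"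
    and E: "\<And>p t. \<bar>lower_terms m p t\<bar> \<le> E"
  shows "phi_deriv (Suc m) p t0 * phi_deriv (Suc m) p t0
    \<le> 4 * (B * B) + 4 * ((2 * A + 2) * (M * E)) + (2 * A + 2) * (M * M)"
proof -
  define K where "K = 2 * A + 2"
  have K: "K \<ge> 0" "K * (M * E) \<ge> 0"
    using A(2) M[of 0 0] E[of 0 0] by (simp_all add: K_def)
  have vM: "K * (phi_deriv m q s * phi_deriv m q s) \<le> K * (M * M)" for q s
    using square_le_square_of_abs_le[OF M] K(1) by (rule mult_left_mono)
  have cont: "continuous_on UNIV (\<lambda>z. weighted_square m K t0 (fst z) (snd z))"
    unfolding weighted_square_def
    by (intro continuous_intros smooth2_continuous smooth2_phi_deriv)
  have per: "weighted_square m K t0 (q + 2 * pi) s = weighted_square m K t0 q s" for q s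
    by (simp add: weighted_square_def phi_deriv_periodic)
  obtain ps ts where ts: "t0 - 1 \<le> ts" "ts \<le> t0"
    and max: "\<And>q s. t0 - 1 \<le> s \<Longrightarrow> s \<le> t0 \<Longrightarrow> weighted_square m K t0 q s \<le> weighted_square m K t0 ps ts"
    by (rule periodic_slab_max[OF cont per, of "t0 - 1" t0]) auto
  have "weighted_square m K t0 ps ts \<le> 4 * (B * B) + 4 * (K * (M * E)) + K * (M * M)"
  proof (cases "ts = t0 - 1")
    case True
    then have "weighted_square m K t0 ps ts = K * (phi_deriv m ps ts * phi_deriv m ps ts)"
      by (simp add: weighted_square_def)
    moreover have "0 \<le> B * B"
      by simp
    ultimately show ?thesis
      using vM[of ps ts] K(2) by linarith
  next
    case False
    then have "(ts - t0 + 1) * (phi_deriv (Suc m) ps ts * phi_deriv (Suc m) ps ts)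
        \<le> phi_deriv (Suc m) ps ts * phi_deriv (Suc m) ps ts"
      using ts by (intro mult_left_le_one_le) auto
    also have "\<dots> \<le> 4 * (B * B) + 4 * (K * (M * E))"
      using False ts by (intro weighted_square_interior_max[OF _ _ max M A E K_def]) auto
    finally show ?thesis
      using vM[of ps ts] by (simp add: weighted_square_def)
  qed
  moreover have "phi_deriv (Suc m) p t0 * phi_deriv (Suc m) p t0 \<le> weighted_square m K t0 p t0"
    using K(1) by (simp add: weighted_square_def)
  moreover have "weighted_square m K t0 p t0 \<le> weighted_square m K t0 ps ts"
    by (rule max) auto
  ultimately show ?thesis
    by (simp add: K_def)
qed

lemma lower_terms_bounds:
  assumes M: "\<And>j p t. j \<le> m \<Longrightarrow> \<bar>phi_deriv j p t\<bar> \<le> M"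
  obtains A B E where "A \<ge> 0"
    "\<And>p t. \<bar>lower_terms (Suc m) p t\<bar> \<le> A * \<bar>phi_deriv (Suc m) p t\<bar> + B"
    "\<And>p t. \<bar>lower_terms m p t\<bar> \<le> E"
proof -
  obtain a b where ab: "dpoly_order a \<le> m" "dpoly_order b \<le> m" "\<And>p t. lower_terms (Suc m) p t
      = dpoly_eval phi_deriv a p t * phi_deriv (Suc m) p t + dpoly_eval phi_deriv b p t"
    using lower_terms_linear[of m] by blast
  obtain e where e: "dpoly_order e \<le> m" "\<And>p t. lower_terms m p t = dpoly_eval phi_deriv e p t"
    using lower_terms_dpoly[of m] by blast
  have a: "\<bar>dpoly_eval phi_deriv a p t\<bar> \<le> dpoly_bound a M" for p t
    by (rule abs_dpoly_eval_le[OF ab(1)]) (rule M)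
  have b: "\<bar>dpoly_eval phi_deriv b p t\<bar> \<le> dpoly_bound b M" for p t
    by (rule abs_dpoly_eval_le[OF ab(2)]) (rule M)
  have linear: "\<bar>lower_terms (Suc m) p t\<bar> \<le> dpoly_bound a M * \<bar>phi_deriv (Suc m) p t\<bar> + dpoly_bound b M"
    for p t
  proof -
    have "\<bar>lower_terms (Suc m) p t\<bar>
        \<le> \<bar>dpoly_eval phi_deriv a p t\<bar> * \<bar>phi_deriv (Suc m) p t\<bar> + \<bar>dpoly_eval phi_deriv b p t\<bar>"
      unfolding ab(3) by (metis abs_mult abs_triangle_ineq)
    then show ?thesis
      using mult_right_mono[OF a[of p t] abs_ge_zero[of "phi_deriv (Suc m) p t"]] b[of p t] by linarith
  qed
  have lower: "\<bar>lower_terms m p t\<bar> \<le> dpoly_bound e M" for p t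
    unfolding e(2) by (rule abs_dpoly_eval_le[OF e(1)]) (rule M)
  have "0 \<le> dpoly_bound a M"
    using a[of 0 0] by linarith
  then show ?thesis
    using linear lower by (rule that)
qed

lemma phi_deriv_bounded:
  assumes "\<exists>B. \<forall>p t. \<bar>phi p t\<bar> \<le> B"
  shows "\<exists>M. \<forall>j\<le>n. \<forall>p t. \<bar>phi_deriv j p t\<bar> \<le> M"
proof (induction n)
  case 0
  then show ?case
    using assms by (simp add: phi_deriv_0)
next
  case (Suc m)
  then obtain M where M: "\<And>j p t. j \<le> m \<Longrightarrow> \<bar>phi_deriv j p t\<bar> \<le> M"
    by blast
  then obtain A B E where A: "A \<ge> 0" "\<And>p t. \<bar>lower_terms (Suc m) p t\<bar> \<le> A * \<bar>phi_deriv (Suc m) p t\<bar> + B"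
    and E: "\<And>p t. \<bar>lower_terms m p t\<bar> \<le> E"
    using lower_terms_bounds[OF M] by blast
  define W where "W = 4 * (B * B) + 4 * ((2 * A + 2) * (M * E)) + (2 * A + 2) * (M * M)"
  have "\<bar>phi_deriv (Suc m) p t\<bar> \<le> sqrt W" for p t
    using real_sqrt_le_mono[OF phi_deriv_square_bound[OF M[OF order_refl] A(2,1) E, of p t]]
    by (simp add: W_def)
  then have "\<forall>j\<le>Suc m. \<forall>p t. \<bar>phi_deriv j p t\<bar> \<le> max M (sqrt W)"
    using M by (auto simp: le_Suc_eq intro: max.coboundedI1 max.coboundedI2)
  then show ?case ..
qed

end

theorem proposition6p2:
  fixes C :: "real \<Rightarrow> real \<Rightarrow> real \<times> real" and lam p0 :: real
  assumes smooth: "smooth_curve_family C"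
    and closed: "\<forall>p t. C (p + 2 * pi) t = C p t"
    and nondeg1: "\<forall>p t. det2 (C p t) (dP C p t) \<noteq> 0"
    and nondeg2: "\<forall>p t. det2 (dP C p t) (dP (dP C) p t) \<noteq> 0"
    and pos: "\<forall>p t. det2 (dP C p t) (dP (dP C) p t) / det2 (C p t) (dP C p t) > 0"
    and flow: "\<forall>p t. dT C p t =
                 (lam + ca_nonlocal C p0 p t) *\<^sub>R C p t + (ca_curv C p t / 2) *\<^sub>R dXi C C p t"
    and bounded: "\<exists>B. \<forall>p t. \<bar>ca_curv C p t\<bar> \<le> B"
  shows "\<forall>n::nat. \<exists>Cn. \<forall>p t. \<bar>ca_curv_deriv C n p t\<bar> \<le> Cn"
proof
  fix n :: nat
  interpret centro_affine_flow C lam p0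
    using smooth closed nondeg1 pos flow by unfold_locales
  show "\<exists>Cn. \<forall>p t. \<bar>ca_curv_deriv C n p t\<bar> \<le> Cn"
    using phi_deriv_bounded[of n] bounded by (auto simp: ca_curv_eq ca_curv_deriv_eq)
qed

end
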